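(* Let $q>3$ be a prime such that $\mathrm{red}_q(H)$ contains a point $Q$ with $x(Q)\equiv-18\pmod q$. Then there exist infinitely many pairs consisting of a squarefree integer $D$ and a primitive integer tuple $[x_0:x_1:x_2:x_3:x_4]\in C_D(\mathbb{Q})$ such that either $q$ divides $D$ or $x_3\equiv0\pmod q$.
   Context: $C_D\subset\mathbb{P}^4$ is the curve over $\mathbb{Q}$ given by $X_0^2-2X_1^2+X_2^2=0$, $X_1^2-2X_2^2+DX_3^2=0$, $X_2^2-2DX_3^2+X_4^2=0$. $E^{(1)}: y^2=x(x+2)(x+6)$, $P=(6,24)\in E^{(1)}(\mathbb{Q})$, $H=\{kP: k\text{ odd}\}\subset E^{(1)}(\mathbb{Q})$, and $\mathrm{red}_q:E^{(1)}(\mathbb{Q})\to E^{(1)}(\mathbb{F}_q)$ is reduction modulo $q$. A primitive tuple means integer coordinates with greatest common divisor $1$. *)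

theory Defs
  imports "HOL-Computational_Algebra.Computational_Algebra" "HOL-Number_Theory.Number_Theory"
begin

text \<open>Points of E^(1): y^2 = x(x+2)(x+6) = x^3 + 8x^2 + 12x over Q.
  None is the point at infinity, Some (x,y) an affine point.\<close>

type_synonym rpoint = "(rat \<times> rat) option"

definition E1_on :: "rat \<Rightarrow> rat \<Rightarrow> bool" where
  "E1_on x y \<longleftrightarrow> y^2 = x * (x + 2) * (x + 6)"

definition E1_points :: "rpoint set" where
  "E1_points = {None} \<union> {Some (x, y) | x y. E1_on x y}"

text \<open>Chord-tangent group law (Weierstrass form with a1=a3=0, a2=8, a4=12, a6=0).\<close>

definition E1_add :: "rpoint \<Rightarrow> rpoint \<Rightarrow> rpoint" where
  "E1_add P1 P2 = (case P1 of None \<Rightarrow> P2 | Some (x1, y1) \<Rightarrow>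
     (case P2 of None \<Rightarrow> P1 | Some (x2, y2) \<Rightarrow>
       (if x1 = x2 \<and> y1 = - y2 then None
        else let l = (if x1 \<noteq> x2 then (y2 - y1) / (x2 - x1)
                      else (3 * x1^2 + 16 * x1 + 12) / (2 * y1));
                 x3 = l^2 - 8 - x1 - x2;
                 y3 = l * (x1 - x3) - y1
             in Some (x3, y3))))"

definition E1_neg :: "rpoint \<Rightarrow> rpoint" where
  "E1_neg P = (case P of None \<Rightarrow> None | Some (x, y) \<Rightarrow> Some (x, - y))"

fun E1_nmul :: "nat \<Rightarrow> rpoint \<Rightarrow> rpoint" where
  "E1_nmul 0 P = None"
| "E1_nmul (Suc n) P = E1_add P (E1_nmul n P)"

definition E1_mul :: "int \<Rightarrow> rpoint \<Rightarrow> rpoint" where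
  "E1_mul k P = (if k \<ge> 0 then E1_nmul (nat k) P else E1_neg (E1_nmul (nat (- k)) P))"

definition P_pt :: rpoint where "P_pt = Some (6, 24)"

definition H_set :: "rpoint set" where
  "H_set = {E1_mul k P_pt | k. odd k}"

definition rat_red :: "int \<Rightarrow> rat \<Rightarrow> int" where
  "rat_red q r = (THE a. 0 \<le> a \<and> a < q \<and>
      [a * snd (quotient_of r) = fst (quotient_of r)] (mod q))"

text \<open>Reduction map E^(1)(Q) \<rightarrow> E^(1)(F_q); points with q dividing the denominator
  of x reduce to the point at infinity (None). Coordinates in F_q are
  represented by residues in {0..q-1}.\<close>

definition red :: "int \<Rightarrow> rpoint \<Rightarrow> (int \<times> int) option" where
  "red q P = (case P of None \<Rightarrow> None | Some (x, y) \<Rightarrow>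
     (if q dvd snd (quotient_of x) then None else Some (rat_red q x, rat_red q y)))"

text \<open>Integer points of the cone over C_D in P^4.\<close>

definition C_eqs :: "int \<Rightarrow> int \<times> int \<times> int \<times> int \<times> int \<Rightarrow> bool" where
  "C_eqs D X = (case X of (x0, x1, x2, x3, x4) \<Rightarrow>
      x0^2 - 2 * x1^2 + x2^2 = 0 \<and> x1^2 - 2 * x2^2 + D * x3^2 = 0 \<and>
      x2^2 - 2 * D * x3^2 + x4^2 = 0)"

definition primitive5 :: "int \<times> int \<times> int \<times> int \<times> int \<Rightarrow> bool" where
  "primitive5 X = (case X of (x0, x1, x2, x3, x4) \<Rightarrow>
      gcd x0 (gcd x1 (gcd x2 (gcd x3 x4))) = 1)"

end

theory Submission
  imports Defs
begin

text \<open>Odd multiples of \<open>P\<close> have 2-descent class \<open>(6, 2, 3)\<close>, and a point of that class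
  with \<open>x \<equiv> -18 (mod q)\<close> gives a primitive point on some \<open>C\<^sub>D\<close> with \<open>q | D x\<^sub>3\<^sup>2\<close>.
  By hypothesis such a point \<open>R \<in> H\<close> exists. Adding to \<open>R\<close> a point of the kernel of reduction
  mod \<open>q\<close> that lies in the trivial class keeps both properties, and there are infinitely many
  such kernel points: the pairwise distinct points \<open>2\<^sup>j P\<close> fall into finitely many residue
  classes mod \<open>q\<close>, and differences within one class lie in the kernel.\<close>

section \<open>Rationals integral at a prime\<close>

definition integral_at :: "int \<Rightarrow> rat \<Rightarrow> bool" where
  "integral_at q r \<longleftrightarrow> (\<exists>a b. \<not> q dvd b \<and> r = of_int a / of_int b)"

definition zero_at :: "int \<Rightarrow> rat \<Rightarrow> bool" where
  "zero_at q r \<longleftrightarrow> (\<exists>a b. q dvd a \<and> \<not> q dvd b \<and> r = of_int a / of_int b)"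

lemma of_int_frac_eq_imp_cross_eq:
  assumes "b \<noteq> 0" "d \<noteq> 0" "(of_int a / of_int b :: rat) = of_int c / of_int d"
  shows "a * d = c * b"
proof -
  have "(of_int (a * d) :: rat) = of_int (c * b)" using assms by (simp add: field_simps)
  thus ?thesis by (simp only: of_int_eq_iff)
qed

lemma rat_coprime_frac:
  fixes r :: rat obtains n d where "r = of_int n / of_int d" "d > 0" "coprime n d"
  using quotient_of_div[of r "fst (quotient_of r)" "snd (quotient_of r)"] quotient_of_denom_pos'[of r]
    quotient_of_coprime[of r "fst (quotient_of r)" "snd (quotient_of r)"]
  by auto

lemma zero_at_imp_integral_at: "zero_at q r \<Longrightarrow> integral_at q r"
  unfolding integral_at_def zero_at_def by blast

context
  fixes q :: int
  assumes prime_q: "prime q"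
begin

lemma prime_not_dvd_1: "\<not> q dvd 1"
  using prime_q not_prime_unit by blast

lemma prime_not_dvd_mult: "\<not> q dvd b \<Longrightarrow> \<not> q dvd d \<Longrightarrow> \<not> q dvd (b * d)"
  using prime_dvd_mult_iff[OF prime_q] by blast

lemma integral_at_of_int: "integral_at q (of_int k)"
  unfolding integral_at_def using prime_not_dvd_1 by (intro exI[of _ k] exI[of _ 1]) auto

lemma integral_at_numeral: "integral_at q (numeral k)"
  using integral_at_of_int[of "numeral k"] by simp

lemma integral_at_0: "integral_at q 0" and integral_at_1: "integral_at q 1"
  using integral_at_of_int[of 0] integral_at_of_int[of 1] by simp_all

lemma zero_at_of_int_iff: "zero_at q (of_int k) \<longleftrightarrow> q dvd k"
proof
  assume "zero_at q (of_int k)"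
  then obtain a b where ab: "q dvd a" "\<not> q dvd b" "of_int k = (of_int a / of_int b :: rat)"
    unfolding zero_at_def by blast
  hence "k * b = a * 1" using of_int_frac_eq_imp_cross_eq[of 1 b k a] by fastforce
  hence "q dvd k * b" using ab(1) by simp
  thus "q dvd k" using ab(2) prime_dvd_mult_iff[OF prime_q] by blast
next
  assume "q dvd k"
  thus "zero_at q (of_int k)"
    unfolding zero_at_def using prime_not_dvd_1 by (intro exI[of _ k] exI[of _ 1]) auto
qed

lemma zero_at_0: "zero_at q 0"
  using zero_at_of_int_iff[of 0] by simp

lemma integral_at_add: "integral_at q r \<Longrightarrow> integral_at q s \<Longrightarrow> integral_at q (r + s)"
proof -
  assume "integral_at q r" "integral_at q s"
  then obtain a b c d where h: "\<not> q dvd b" "r = of_int a / of_int b" "\<not> q dvd d" "s = of_int c / of_int d"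
    unfolding integral_at_def by blast
  have "b \<noteq> 0" "d \<noteq> 0" using h by auto
  hence "r + s = of_int (a * d + c * b) / of_int (b * d)" using h by (simp add: field_simps)
  thus ?thesis unfolding integral_at_def using prime_not_dvd_mult[OF h(1,3)] by blast
qed

lemma integral_at_mult: "integral_at q r \<Longrightarrow> integral_at q s \<Longrightarrow> integral_at q (r * s)"
proof -
  assume "integral_at q r" "integral_at q s"
  then obtain a b c d where h: "\<not> q dvd b" "r = of_int a / of_int b" "\<not> q dvd d" "s = of_int c / of_int d"
    unfolding integral_at_def by blast
  have "r * s = of_int (a * c) / of_int (b * d)" using h by simp
  thus ?thesis unfolding integral_at_def using prime_not_dvd_mult[OF h(1,3)] by blast
qed

lemma integral_at_minus: "integral_at q r \<Longrightarrow> integral_at q (- r)"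
  unfolding integral_at_def by (metis minus_divide_left of_int_minus)

lemma integral_at_diff: "integral_at q r \<Longrightarrow> integral_at q s \<Longrightarrow> integral_at q (r - s)"
  using integral_at_add[of r "- s"] integral_at_minus[of s] by simp

lemma integral_at_power: "integral_at q r \<Longrightarrow> integral_at q (r ^ n)"
  by (induction n) (auto intro: integral_at_mult integral_at_1)

lemmas integral_at_intros =
  integral_at_add integral_at_diff integral_at_mult integral_at_power integral_at_numeral
  integral_at_0 integral_at_1

lemma zero_at_add: "zero_at q r \<Longrightarrow> zero_at q s \<Longrightarrow> zero_at q (r + s)"
proof -
  assume "zero_at q r" "zero_at q s"
  then obtain a b c d where h: "q dvd a" "\<not> q dvd b" "r = of_int a / of_int b"
      "q dvd c" "\<not> q dvd d" "s = of_int c / of_int d"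
    unfolding zero_at_def by blast
  have "b \<noteq> 0" "d \<noteq> 0" using h by auto
  hence "r + s = of_int (a * d + c * b) / of_int (b * d)" using h by (simp add: field_simps)
  moreover have "q dvd a * d + c * b" using h by simp
  ultimately show ?thesis unfolding zero_at_def using prime_not_dvd_mult[OF h(2,5)] by blast
qed

lemma zero_at_mult_left: "zero_at q r \<Longrightarrow> integral_at q s \<Longrightarrow> zero_at q (r * s)"
proof -
  assume "zero_at q r" "integral_at q s"
  then obtain a b c d where h: "q dvd a" "\<not> q dvd b" "r = of_int a / of_int b"
      "\<not> q dvd d" "s = of_int c / of_int d"
    unfolding zero_at_def integral_at_def by blast
  have "r * s = of_int (a * c) / of_int (b * d)" using h by simp
  moreover have "q dvd a * c" using h by simp
  ultimately show ?thesis unfolding zero_at_def using prime_not_dvd_mult[OF h(2,4)] by blast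
qed

lemma zero_at_mult_right: "integral_at q s \<Longrightarrow> zero_at q r \<Longrightarrow> zero_at q (s * r)"
  using zero_at_mult_left[of r s] by (simp add: mult.commute)

lemma zero_at_minus: "zero_at q r \<Longrightarrow> zero_at q (- r)"
  unfolding zero_at_def by (metis dvd_minus_iff minus_divide_left of_int_minus)

lemma zero_at_diff: "zero_at q r \<Longrightarrow> zero_at q s \<Longrightarrow> zero_at q (r - s)"
  using zero_at_add[of r "- s"] zero_at_minus[of s] by simp

lemma zero_at_mult_cases:
  assumes "integral_at q r" "integral_at q s" "zero_at q (r * s)"
  shows "zero_at q r \<or> zero_at q s"
proof -
  obtain a b c d where h: "\<not> q dvd b" "r = of_int a / of_int b" "\<not> q dvd d" "s = of_int c / of_int d"
    using assms(1,2) unfolding integral_at_def by blast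
  obtain e f where g: "q dvd e" "\<not> q dvd f" "r * s = of_int e / of_int f"
    using assms(3) unfolding zero_at_def by blast
  have "of_int (a * c) / of_int (b * d) = (of_int e / of_int f :: rat)" using h g by simp
  moreover have "b * d \<noteq> 0" "f \<noteq> 0" using h(1,3) g(2) by auto
  ultimately have "a * c * f = e * (b * d)" using of_int_frac_eq_imp_cross_eq by blast
  hence "q dvd a * c * f" using g(1) by simp
  hence "q dvd a \<or> q dvd c" using g(2) prime_dvd_mult_iff[OF prime_q] by blast
  thus ?thesis unfolding zero_at_def using h by blast
qed

lemma not_zero_at_mult:
  "integral_at q u \<Longrightarrow> \<not> zero_at q u \<Longrightarrow> integral_at q v \<Longrightarrow> \<not> zero_at q v \<Longrightarrow> \<not> zero_at q (u * v)"
  using zero_at_mult_cases by blast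

lemma not_zero_at_add:
  "\<not> zero_at q u \<Longrightarrow> zero_at q e \<Longrightarrow> \<not> zero_at q (u + e)"
  using zero_at_diff[of "u + e" e] by auto

lemma integral_at_divide:
  assumes "integral_at q n" "integral_at q d" "\<not> zero_at q d"
  shows "integral_at q (n / d)"
proof -
  obtain a b c e where h: "\<not> q dvd b" "n = of_int a / of_int b" "\<not> q dvd e" "d = of_int c / of_int e"
    using assms(1,2) unfolding integral_at_def by blast
  have "\<not> q dvd c" using assms(3) h unfolding zero_at_def by blast
  moreover have "n / d = of_int (a * e) / of_int (b * c)" using h by auto
  ultimately show ?thesis unfolding integral_at_def using prime_not_dvd_mult[OF h(1)] by blast
qed

lemma zero_at_divide:
  "zero_at q n \<Longrightarrow> integral_at q d \<Longrightarrow> \<not> zero_at q d \<Longrightarrow> zero_at q (n / d)"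
  using zero_at_mult_left[of n "1 / d"] integral_at_divide[OF integral_at_1] by simp

lemma not_integral_at_divide:
  assumes "\<not> zero_at q u" "zero_at q d" "d \<noteq> 0"
  shows "\<not> integral_at q (u / d)"
proof
  assume "integral_at q (u / d)"
  hence "zero_at q (u / d * d)" using zero_at_mult_right assms(2) by blast
  thus False using assms(1,3) by simp
qed

lemma integral_at_coprime_frac_imp:
  assumes "integral_at q r" "r = of_int n / of_int d" "d \<noteq> 0" "coprime n d"
  shows "\<not> q dvd d"
proof
  assume qd: "q dvd d"
  obtain a b where ab: "\<not> q dvd b" "r = of_int a / of_int b"
    using assms(1) unfolding integral_at_def by blast
  have "n * b = a * d" using of_int_frac_eq_imp_cross_eq[of d b n a] assms(2,3) ab by auto
  hence "q dvd n * b" using qd by simp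
  hence "q dvd n" using ab(1) prime_dvd_mult_iff[OF prime_q] by blast
  hence "q dvd gcd n d" using qd by simp
  thus False using assms(4) prime_not_dvd_1 by simp
qed

lemma integral_at_iff_denominator: "integral_at q r \<longleftrightarrow> \<not> q dvd snd (quotient_of r)"
proof
  obtain n d where nd: "quotient_of r = (n, d)" by fastforce
  assume "integral_at q r"
  thus "\<not> q dvd snd (quotient_of r)"
    using integral_at_coprime_frac_imp quotient_of_div[OF nd] quotient_of_denom_pos[OF nd]
      quotient_of_coprime[OF nd] nd by auto
next
  assume "\<not> q dvd snd (quotient_of r)"
  thus "integral_at q r" unfolding integral_at_def by (metis prod.collapse quotient_of_div)
qed

lemma integral_at_square_imp: "integral_at q (r ^ 2) \<Longrightarrow> integral_at q r"
proof -
  assume sq: "integral_at q (r ^ 2)"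
  obtain n d where nd: "r = of_int n / of_int d" "d > 0" "coprime n d" by (rule rat_coprime_frac)
  have "\<not> q dvd d ^ 2"
    using integral_at_coprime_frac_imp[OF sq, of "n ^ 2" "d ^ 2"] nd by (simp add: power_divide)
  hence "\<not> q dvd d" by (metis dvd_mult2 power2_eq_square)
  thus "integral_at q r" unfolding integral_at_def using nd by blast
qed

lemma zero_at_square_imp: "zero_at q (r ^ 2) \<Longrightarrow> zero_at q r"
proof -
  assume sq: "zero_at q (r ^ 2)"
  obtain n d where nd: "r = of_int n / of_int d" "d > 0" "coprime n d" by (rule rat_coprime_frac)
  have "integral_at q r" using integral_at_square_imp zero_at_imp_integral_at[OF sq] by blast
  hence nq: "\<not> q dvd d" using integral_at_coprime_frac_imp nd by simp
  obtain a b where ab: "q dvd a" "\<not> q dvd b" "r ^ 2 = of_int a / of_int b"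
    using sq unfolding zero_at_def by blast
  have "r ^ 2 = of_int (n ^ 2) / of_int (d ^ 2)" using nd by (simp add: power_divide)
  hence "n ^ 2 * b = a * d ^ 2" using of_int_frac_eq_imp_cross_eq[of "d ^ 2" b "n ^ 2" a] ab nd by auto
  hence "q dvd n ^ 2 * b" using ab(1) by simp
  hence "q dvd n ^ 2" using ab(2) prime_dvd_mult_iff[OF prime_q] by blast
  hence "q dvd n" using prime_dvd_power[OF prime_q] by blast
  thus "zero_at q r" unfolding zero_at_def using nd nq by blast
qed

lemma zero_at_inverse_of_not_integral_at: "\<not> integral_at q x \<Longrightarrow> zero_at q (1 / x)"
proof -
  assume nx: "\<not> integral_at q x"
  obtain n d where nd: "x = of_int n / of_int d" "d > 0" "coprime n d" by (rule rat_coprime_frac)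
  have qd: "q dvd d" using nx nd unfolding integral_at_def by blast
  have "\<not> q dvd n"
  proof
    assume "q dvd n"
    hence "q dvd gcd n d" using qd by simp
    thus False using nd(3) prime_not_dvd_1 by simp
  qed
  moreover have "1 / x = of_int d / of_int n" using nd by simp
  ultimately show "zero_at q (1 / x)" unfolding zero_at_def using qd by blast
qed

lemma rat_red_bounds_zero_at:
  assumes "integral_at q r"
  shows "0 \<le> rat_red q r" "rat_red q r < q" "zero_at q (r - of_int (rat_red q r))"
proof -
  obtain n d where nd: "quotient_of r = (n, d)" by fastforce
  have r: "r = of_int n / of_int d" and d0: "d \<noteq> 0"
    using quotient_of_div[OF nd] quotient_of_denom_pos[OF nd] by auto
  have nq: "\<not> q dvd d" using assms nd integral_at_iff_denominator by simp
  have qpos: "q > 0" using prime_q prime_gt_0_int by blast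
  have "coprime d q" using nq prime_q by (meson coprime_commute prime_imp_coprime)
  then obtain y where y: "[d * y = 1] (mod q)" using cong_solve_coprime_int by blast
  define a where "a = (n * y) mod q"
  have a: "0 \<le> a \<and> a < q \<and> [a * d = n] (mod q)"
  proof -
    have "[a * d = n * y * d] (mod q)"
      unfolding a_def by (simp add: cong_def mod_mult_left_eq)
    also have "n * y * d = n * (d * y)" by (simp add: ac_simps)
    also have "[n * (d * y) = n * 1] (mod q)" using y by (rule cong_scalar_left)
    finally show ?thesis unfolding a_def using qpos by simp
  qed
  have "rat_red q r = a"
    unfolding rat_red_def nd fst_conv snd_conv
  proof (rule the_equality)
    fix b assume "0 \<le> b \<and> b < q \<and> [b * d = n] (mod q)"
    hence b: "0 \<le> b" "b < q" "[b * d = a * d] (mod q)" using a by (auto intro: cong_trans cong_sym)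
    hence "[b = a] (mod q)" using \<open>coprime d q\<close> cong_mult_rcancel by blast
    thus "b = a" using a b(1,2) by (intro cong_less_imp_eq_int) auto
  qed (fact a)
  moreover have "zero_at q (r - of_int a)"
  proof -
    have "r - of_int a = of_int (n - a * d) / of_int d" using r d0 by (simp add: field_simps)
    moreover have "q dvd n - a * d" using a by (simp add: cong_iff_dvd_diff dvd_diff_commute)
    ultimately show ?thesis unfolding zero_at_def using nq by blast
  qed
  ultimately show "0 \<le> rat_red q r" "rat_red q r < q" "zero_at q (r - of_int (rat_red q r))"
    using a by simp_all
qed

end

section \<open>The chord-tangent law on \<open>E\<^sup>(\<^sup>1\<^sup>)\<close>\<close>

definition E1_cubic :: "rat \<Rightarrow> rat" where
  "E1_cubic x = x * (x + 2) * (x + 6)"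

definition E1_cubic_deriv :: "rat \<Rightarrow> rat" where
  "E1_cubic_deriv x = 3 * x^2 + 16 * x + 12"

lemma E1_points_simps [simp]:
  "None \<in> E1_points" "Some (x, y) \<in> E1_points \<longleftrightarrow> y^2 = E1_cubic x"
  by (auto simp: E1_points_def E1_on_def E1_cubic_def)

lemma E1_cubic_deriv_nonzero_at_root: "E1_cubic c = 0 \<Longrightarrow> E1_cubic_deriv c \<noteq> 0"
proof -
  assume "E1_cubic c = 0"
  hence "c = 0 \<or> c = -2 \<or> c = -6" by (auto simp: E1_cubic_def add_eq_0_iff)
  thus ?thesis by (auto simp: E1_cubic_deriv_def power2_eq_square)
qed

lemma E1_same_x_imp: "y1^2 = E1_cubic x \<Longrightarrow> y2^2 = E1_cubic x \<Longrightarrow> y2 = y1 \<or> y2 = - y1"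
  by (metis power2_eq_iff)

lemma E1_add_None_left [simp]: "E1_add None B = B"
  by (simp add: E1_add_def)

lemma E1_add_None_right [simp]: "E1_add A None = A"
  by (cases A) (auto simp: E1_add_def)

lemma E1_add_chord:
  assumes "x1 \<noteq> x2" "l = (y2 - y1) / (x2 - x1)" "x3 = l^2 - 8 - x1 - x2"
  shows "E1_add (Some (x1, y1)) (Some (x2, y2)) = Some (x3, l * (x1 - x3) - y1)"
  using assms by (simp add: E1_add_def Let_def)

lemma E1_add_tangent:
  assumes "y1 \<noteq> 0" "l = E1_cubic_deriv x1 / (2 * y1)" "x3 = l^2 - 8 - x1 - x1"
  shows "E1_add (Some (x1, y1)) (Some (x1, y1)) = Some (x3, l * (x1 - x3) - y1)"
  using assms by (simp add: E1_add_def E1_cubic_deriv_def Let_def)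

lemma E1_neg_simps [simp]: "E1_neg None = None" "E1_neg (Some (x, y)) = Some (x, - y)"
  by (simp_all add: E1_neg_def)

text \<open>Vieta for the line \<open>y = l X + m\<close> meeting the curve at \<open>x1, x2, x3\<close>: the \<open>X\<^sup>2\<close>-coefficient
  of \<open>E1_cubic X - (l X + m)\<^sup>2\<close> gives \<open>x3\<close>, the \<open>X\<close>-coefficient is the hypothesis on \<open>12 - 2 l m\<close>,
  and the constant term then follows from \<open>x1\<close> being a root.\<close>

lemma line_meets_E1:
  assumes "(l * x1 + m)^2 = E1_cubic x1" "x3 = l^2 - 8 - x1 - x2"
    and "12 - 2 * l * m = x1 * x2 + x1 * x3 + x2 * x3"
  shows "E1_cubic X - (l * X + m)^2 = (X - x1) * (X - x2) * (X - x3)"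
proof -
  have expand: "E1_cubic X - (l * X + m)^2 = X^3 + (8 - l^2) * X^2 + (12 - 2 * l * m) * X - m^2" for X
    by (simp add: E1_cubic_def algebra_simps power2_eq_square power3_eq_cube)
  have l2: "8 - l^2 = - (x1 + x2 + x3)" using assms(2) by simp
  have "0 = x1^3 + (8 - l^2) * x1^2 + (12 - 2 * l * m) * x1 - m^2"
    using expand[of x1] assms(1) by simp
  also have "\<dots> = x1 * x2 * x3 - m^2"
    unfolding l2 assms(3) by (simp add: algebra_simps power2_eq_square power3_eq_cube)
  finally have m2: "m^2 = x1 * x2 * x3" by simp
  show ?thesis unfolding expand l2 assms(3) m2
    by (simp add: algebra_simps power2_eq_square power3_eq_cube)
qed

lemma chord_coefficient:
  assumes "(l * x1 + m)^2 = E1_cubic x1" "(l * x2 + m)^2 = E1_cubic x2" "x1 \<noteq> x2"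
    and "x3 = l^2 - 8 - x1 - x2"
  shows "12 - 2 * l * m = x1 * x2 + x1 * x3 + x2 * x3"
proof -
  have "(x1 - x2) * (x1^2 + x1 * x2 + x2^2 + (8 - l^2) * (x1 + x2) + 12 - 2 * l * m) =
      (E1_cubic x1 - (l * x1 + m)^2) - (E1_cubic x2 - (l * x2 + m)^2)"
    by (simp add: E1_cubic_def algebra_simps power2_eq_square power3_eq_cube)
  hence "x1^2 + x1 * x2 + x2^2 + (8 - l^2) * (x1 + x2) + 12 - 2 * l * m = 0"
    using assms(1-3) by simp
  thus ?thesis unfolding assms(4) by (simp add: algebra_simps power2_eq_square)
qed

lemma tangent_coefficient_iff:
  assumes "x3 = l^2 - 8 - x1 - x1"
  shows "E1_cubic_deriv x1 = 2 * l * (l * x1 + m) \<longleftrightarrow> 12 - 2 * l * m = x1 * x1 + x1 * x3 + x1 * x3"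
proof -
  have "2 * l * (l * x1 + m) = 2 * l^2 * x1 + 2 * l * m" by (simp add: algebra_simps power2_eq_square)
  also have "\<dots> = 2 * (x3 + 2 * x1 + 8) * x1 + 2 * l * m" using assms by simp
  finally show ?thesis by (auto simp: E1_cubic_deriv_def algebra_simps power2_eq_square)
qed

lemma E1_add_on_line:
  assumes "y1^2 = E1_cubic x1" "y2^2 = E1_cubic x2"
    and "E1_add (Some (x1, y1)) (Some (x2, y2)) = Some (x3, y3)"
  obtains l m where "y1 = l * x1 + m" "y2 = l * x2 + m" "y3 = - (l * x3 + m)"
    "x3 = l^2 - 8 - x1 - x2" "12 - 2 * l * m = x1 * x2 + x1 * x3 + x2 * x3"
proof (cases "x1 = x2")
  case False
  define l where "l = (y2 - y1) / (x2 - x1)"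
  define m where "m = y1 - l * x1"
  have "l * (x2 - x1) = y2 - y1" using False unfolding l_def by simp
  hence y2: "y2 = l * x2 + m" unfolding m_def by (simp add: algebra_simps)
  have x3: "x3 = l^2 - 8 - x1 - x2" and "y3 = l * (x1 - x3) - y1"
    using assms(3) E1_add_chord[OF False l_def refl] by auto
  hence "y3 = - (l * x3 + m)" unfolding m_def by (simp add: algebra_simps)
  moreover have "12 - 2 * l * m = x1 * x2 + x1 * x3 + x2 * x3"
    using assms(1,2) y2 by (intro chord_coefficient False x3) (simp_all add: m_def)
  ultimately show ?thesis using that[of l m] y2 x3 unfolding m_def by simp
next
  case True
  have "y2 \<noteq> - y1" using assms(3) True by (auto simp: E1_add_def)
  hence y2: "y2 = y1" and y1: "y1 \<noteq> 0" using E1_same_x_imp assms(1,2) True by fastforce+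
  define l where "l = E1_cubic_deriv x1 / (2 * y1)"
  define m where "m = y1 - l * x1"
  have x3: "x3 = l^2 - 8 - x1 - x1" and "y3 = l * (x1 - x3) - y1"
    using assms(3) E1_add_tangent[OF y1 l_def refl] True y2 by auto
  hence "y3 = - (l * x3 + m)" unfolding m_def by (simp add: algebra_simps)
  moreover have "12 - 2 * l * m = x1 * x1 + x1 * x3 + x1 * x3"
    using y1 tangent_coefficient_iff[OF x3, of m] by (simp add: l_def m_def)
  ultimately show ?thesis using that[of l m] x3 True y2 unfolding m_def by simp
qed

lemma E1_add_third_point:
  assumes "y1^2 = E1_cubic x1" "y2^2 = E1_cubic x2"
    and "E1_add (Some (x1, y1)) (Some (x2, y2)) = Some (x3, y3)"
  obtains l m where "y3 = - (l * x3 + m)"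
    "\<And>X. E1_cubic X - (l * X + m)^2 = (X - x1) * (X - x2) * (X - x3)"
proof -
  obtain l m where lm: "y1 = l * x1 + m" "y3 = - (l * x3 + m)"
      "x3 = l^2 - 8 - x1 - x2" "12 - 2 * l * m = x1 * x2 + x1 * x3 + x2 * x3"
    using E1_add_on_line[OF assms] by metis
  show ?thesis using that[of l m] line_meets_E1[OF _ lm(3,4)] lm(1,2) assms(1) by auto
qed

lemma E1_add_in_E1_points:
  assumes "A \<in> E1_points" "B \<in> E1_points" shows "E1_add A B \<in> E1_points"
proof (cases "A = None \<or> B = None \<or> E1_add A B = None")
  case False
  then obtain x1 y1 x2 y2 x3 y3 where A: "A = Some (x1, y1)" and B: "B = Some (x2, y2)"
      and sum: "E1_add (Some (x1, y1)) (Some (x2, y2)) = Some (x3, y3)"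
    by (metis option.exhaust surj_pair)
  have on: "y1^2 = E1_cubic x1" "y2^2 = E1_cubic x2" using assms A B by auto
  obtain l m where "y3 = - (l * x3 + m)"
      "\<And>X. E1_cubic X - (l * X + m)^2 = (X - x1) * (X - x2) * (X - x3)"
    using E1_add_third_point[OF on sum] by metis
  hence "y3^2 = E1_cubic x3" by (metis diff_self eq_iff_diff_eq_0 mult_zero_right power2_minus)
  thus ?thesis using A B sum by simp
qed (use assms in auto)

lemma E1_add_neg_cancel_affine:
  assumes "c2^2 = E1_cubic c1" "a2^2 = E1_cubic a1"
    and "E1_add (Some (c1, c2)) (Some (a1, a2)) = Some (x3, y3)"
  shows "E1_add (Some (c1, - c2)) (Some (x3, y3)) = Some (a1, a2)"
proof -
  obtain l m where lm: "c2 = l * c1 + m" "a2 = l * a1 + m" "y3 = - (l * x3 + m)"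
      "x3 = l^2 - 8 - c1 - a1" "12 - 2 * l * m = c1 * a1 + c1 * x3 + a1 * x3"
    using E1_add_on_line[OF assms] by metis
  show ?thesis
  proof (cases "c1 = x3")
    case False
    have "- l = (y3 - - c2) / (x3 - c1)" using False lm(1,3) by (simp add: field_simps)
    moreover have "a1 = (- l)^2 - 8 - c1 - x3" using lm(4) by simp
    ultimately have "E1_add (Some (c1, - c2)) (Some (x3, y3)) = Some (a1, - l * (c1 - a1) - - c2)"
      by (rule E1_add_chord[OF False])
    thus ?thesis using lm(1,2) by (simp add: algebra_simps)
  next
    case True
    have a1: "a1 = l^2 - 8 - c1 - c1" using lm(4) True by simp
    have "12 - 2 * l * m = c1 * c1 + c1 * a1 + c1 * a1" using lm(5) True by (simp add: algebra_simps)
    hence deriv: "E1_cubic_deriv c1 = 2 * l * c2"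
      using tangent_coefficient_iff[OF a1, of m] lm(1) by simp
    have c2: "- c2 \<noteq> 0"
    proof
      assume "- c2 = 0"
      hence "E1_cubic c1 = 0" "E1_cubic_deriv c1 = 0" using assms(1) deriv by simp_all
      thus False using E1_cubic_deriv_nonzero_at_root by blast
    qed
    have "- l = E1_cubic_deriv c1 / (2 * - c2)" using deriv c2 by (simp add: field_simps)
    moreover have "a1 = (- l)^2 - 8 - c1 - c1" using a1 by simp
    ultimately have "E1_add (Some (c1, - c2)) (Some (c1, - c2)) = Some (a1, - l * (c1 - a1) - - c2)"
      by (rule E1_add_tangent[OF c2])
    moreover have "Some (x3, y3) = Some (c1, - c2)" using lm(1,3) True by simp
    ultimately have "E1_add (Some (c1, - c2)) (Some (x3, y3)) = Some (a1, - l * (c1 - a1) - - c2)"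
      by simp
    thus ?thesis using lm(1,2) by (simp add: algebra_simps)
  qed
qed

lemma E1_add_neg_cancel:
  assumes "C \<in> E1_points" "A \<in> E1_points"
  shows "E1_add (E1_neg C) (E1_add C A) = A"
proof (cases "C = None \<or> A = None \<or> E1_add C A = None")
  case False
  then obtain c1 c2 a1 a2 x3 y3 where C: "C = Some (c1, c2)" and A: "A = Some (a1, a2)"
      and sum: "E1_add (Some (c1, c2)) (Some (a1, a2)) = Some (x3, y3)"
    by (metis option.exhaust surj_pair)
  show ?thesis using E1_add_neg_cancel_affine[OF _ _ sum] assms C A sum by simp
next
  case True
  thus ?thesis by (cases C; cases A) (auto simp: E1_add_def Let_def split: if_splits)
qed

section \<open>Descent classes of multiples of \<open>P\<close>\<close>

text \<open>The 2-descent map \<open>x \<mapsto> (x, x + 2, x + 6)\<close> modulo squares; only its additivity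
  \<open>sq_class_add\<close> is used.\<close>

definition sq_class :: "rat \<Rightarrow> rat \<Rightarrow> rat \<Rightarrow> rat \<Rightarrow> bool" where
  "sq_class c0 c2 c6 x \<longleftrightarrow> (\<exists>s. x = c0 * s^2) \<and> (\<exists>s. x + 2 = c2 * s^2) \<and> (\<exists>s. x + 6 = c6 * s^2)"

lemma rat_square_ne_2: "(s :: rat)^2 \<noteq> 2"
proof
  assume s2: "s^2 = 2"
  obtain n d where nd: "s = of_int n / of_int d" "d > 0" "coprime n d" by (rule rat_coprime_frac)
  have "of_int (n^2) = (of_int (2 * d^2) :: rat)" using s2 nd by (simp add: power_divide field_simps)
  hence n2: "n^2 = 2 * d^2" by (simp only: of_int_eq_iff)
  hence "even n" by (metis dvd_triv_left even_power)
  then obtain t where "n = 2 * t" by blast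
  hence "d^2 = 2 * t^2" using n2 by (simp add: power2_eq_square)
  hence "even d" by (metis dvd_triv_left even_power)
  thus False using \<open>even n\<close> nd(3) by fastforce
qed

lemma sq_class_remove_squares:
  "sq_class (c0 * d0^2) (c2 * d2^2) (c6 * d6^2) x \<Longrightarrow> sq_class c0 c2 c6 x"
  unfolding sq_class_def by (metis mult.assoc power_mult_distrib)

lemma sq_class_1_1_1_cubic_nonzero: "sq_class 1 1 1 x \<Longrightarrow> E1_cubic x \<noteq> 0"
proof -
  assume "sq_class 1 1 1 x"
  then obtain s t where "x = s^2" "x + 2 = t^2" unfolding sq_class_def by auto
  hence "x \<ge> 0" "x \<noteq> 0" using rat_square_ne_2[of t] by auto
  moreover have "x + 2 \<noteq> 0" "x + 6 \<noteq> 0" using \<open>x \<ge> 0\<close> by linarith+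
  ultimately show ?thesis by (simp add: E1_cubic_def)
qed

lemma sq_class_6_2_3_cubic_nonzero: "sq_class 6 2 3 x \<Longrightarrow> E1_cubic x \<noteq> 0"
proof -
  assume "sq_class 6 2 3 x"
  then obtain s u where "x = 6 * s^2" "x + 6 = 3 * u^2" unfolding sq_class_def by auto
  hence "x \<ge> 0" "x \<noteq> 0" using rat_square_ne_2[of u] by auto
  moreover have "x + 2 \<noteq> 0" "x + 6 \<noteq> 0" using \<open>x \<ge> 0\<close> by linarith+
  ultimately show ?thesis by (simp add: E1_cubic_def)
qed

lemma E1_add_shifted_x_product_square:
  assumes "y1^2 = E1_cubic x1" "y2^2 = E1_cubic x2"
    and "E1_add (Some (x1, y1)) (Some (x2, y2)) = Some (x3, y3)" and "E1_cubic (- e) = 0"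
  shows "\<exists>M. (x1 + e) * (x2 + e) * (x3 + e) = M^2"
proof -
  obtain l m where "\<And>X. E1_cubic X - (l * X + m)^2 = (X - x1) * (X - x2) * (X - x3)"
    using E1_add_third_point[OF assms(1-3)] by metis
  from this[of "- e"] have "(x1 + e) * (x2 + e) * (x3 + e) = (m - l * e)^2"
    using assms(4) by (simp add: algebra_simps power2_eq_square)
  thus ?thesis by blast
qed

lemma square_multiple_of_product:
  fixes a b z M c d s t :: rat
  assumes "a * b * z = M^2" "a = c * s^2" "b = d * t^2" "a \<noteq> 0" "b \<noteq> 0"
  shows "\<exists>u. z = (c * d) * u^2"
proof -
  have nz: "c \<noteq> 0" "d \<noteq> 0" "s \<noteq> 0" "t \<noteq> 0" using assms by auto
  have "z = M^2 / (a * b)" using assms(1,4,5) by (simp add: field_simps)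
  also have "\<dots> = (c * d) * (M / (c * d * s * t))^2"
    using assms(2,3) nz by (simp add: field_simps power2_eq_square)
  finally show ?thesis by blast
qed

lemma sq_class_add:
  assumes "y1^2 = E1_cubic x1" "y2^2 = E1_cubic x2"
    and "E1_add (Some (x1, y1)) (Some (x2, y2)) = Some (x3, y3)"
    and "sq_class a0 a2 a6 x1" "sq_class b0 b2 b6 x2" "E1_cubic x1 \<noteq> 0" "E1_cubic x2 \<noteq> 0"
  shows "sq_class (a0 * b0) (a2 * b2) (a6 * b6) x3"
proof -
  have shift: "\<exists>u. x3 + e = (ae * be) * u^2"
    if "E1_cubic (- e) = 0" "\<exists>s. x1 + e = ae * s^2" "\<exists>s. x2 + e = be * s^2"
      "x1 + e \<noteq> 0" "x2 + e \<noteq> 0" for e ae be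
    using E1_add_shifted_x_product_square[OF assms(1-3) that(1)] that(2-5)
      square_multiple_of_product by metis
  have "x1 \<noteq> 0" "x1 + 2 \<noteq> 0" "x1 + 6 \<noteq> 0" "x2 \<noteq> 0" "x2 + 2 \<noteq> 0" "x2 + 6 \<noteq> 0"
    using assms(6,7) by (auto simp: E1_cubic_def)
  thus ?thesis
    using shift[of 0 a0 b0] shift[of 2 a2 b2] shift[of 6 a6 b6] assms(4,5)
    unfolding sq_class_def by (simp add: E1_cubic_def)
qed

lemma P_pt_in_E1_points: "P_pt \<in> E1_points"
  by (simp add: P_pt_def E1_cubic_def)

lemma E1_nmul_in_E1_points: "A \<in> E1_points \<Longrightarrow> E1_nmul n A \<in> E1_points"
  by (induction n) (simp_all add: E1_add_in_E1_points)

lemma sq_class_x_P: "sq_class 6 2 3 6"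
  unfolding sq_class_def by (intro conjI exI[of _ 1] exI[of _ 2]) simp_all

lemma not_sq_class_1_1_1_6: "\<not> sq_class 1 1 1 6"
proof
  assume "sq_class 1 1 1 6"
  then obtain t :: rat where "8 = t^2" unfolding sq_class_def by auto
  hence "(t / 2)^2 = 2" by (simp add: power_divide)
  thus False using rat_square_ne_2 by blast
qed

lemma E1_nmul_P_sq_class:
  "(odd n \<longrightarrow> (\<exists>x y. E1_nmul n P_pt = Some (x, y) \<and> sq_class 6 2 3 x)) \<and>
   (even n \<longrightarrow> E1_nmul n P_pt = None \<or> (\<exists>x y. E1_nmul n P_pt = Some (x, y) \<and> sq_class 1 1 1 x))"
proof (induction n)
  case (Suc n)
  define S where "S = E1_nmul n P_pt"
  have step: "E1_nmul (Suc n) P_pt = E1_add (Some (6, 24)) S" unfolding S_def by (simp add: P_pt_def)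
  show ?case
  proof (cases S)
    case None
    thus ?thesis using Suc.IH sq_class_x_P step unfolding S_def by auto
  next
    case (Some s)
    then obtain x y where S: "S = Some (x, y)" by fastforce
    have onS: "y^2 = E1_cubic x" using E1_nmul_in_E1_points[OF P_pt_in_E1_points, of n] S S_def by simp
    have onP: "24^2 = E1_cubic 6" by (simp add: E1_cubic_def)
    show ?thesis
    proof (cases "E1_add (Some (6, 24)) S")
      case None
      hence "x = 6" using S by (auto simp: E1_add_def Let_def split: if_splits)
      thus ?thesis using Suc.IH not_sq_class_1_1_1_6 step None unfolding S_def[symmetric] S by auto
    next
      case (Some r)
      then obtain x3 y3 where sum: "E1_add (Some (6, 24)) (Some (x, y)) = Some (x3, y3)"
        using S by fastforce
      note add = sq_class_add[OF onP onS sum sq_class_x_P _ sq_class_6_2_3_cubic_nonzero[OF sq_class_x_P]]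
      show ?thesis
      proof (cases "even n")
        case True
        then have "sq_class 1 1 1 x" using Suc.IH unfolding S_def[symmetric] S by auto
        hence "sq_class 6 2 3 x3" using add[of 1 1 1] sq_class_1_1_1_cubic_nonzero by simp
        thus ?thesis using True step S sum by auto
      next
        case False
        then have "sq_class 6 2 3 x" using Suc.IH unfolding S_def[symmetric] S by auto
        hence "sq_class (1 * 6^2) (1 * 2^2) (1 * 3^2) x3"
          using add[of 6 2 3] sq_class_6_2_3_cubic_nonzero by simp
        hence "sq_class 1 1 1 x3" by (rule sq_class_remove_squares)
        thus ?thesis using False step S sum by auto
      qed
    qed
  qed
qed simp

lemma E1_mul_P_odd:
  assumes "odd k"
  obtains x y where "E1_mul k P_pt = Some (x, y)" "y^2 = E1_cubic x" "sq_class 6 2 3 x"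
proof -
  have "odd (nat \<bar>k\<bar>)" using assms by (simp add: even_nat_iff)
  then obtain x y where xy: "E1_nmul (nat \<bar>k\<bar>) P_pt = Some (x, y)" "sq_class 6 2 3 x"
    using E1_nmul_P_sq_class by blast
  have "y^2 = E1_cubic x" using E1_nmul_in_E1_points[OF P_pt_in_E1_points] xy(1) by (metis E1_points_simps(2))
  moreover have "E1_mul k P_pt = Some (x, y) \<or> E1_mul k P_pt = Some (x, - y)"
    using xy(1) unfolding E1_mul_def by (auto simp: E1_neg_def)
  ultimately show ?thesis using that xy(2) by (metis power2_minus)
qed

text \<open>\<open>doubling_seq j = 2\<^sup>j\<^sup>+\<^sup>1 P\<close>. Its \<open>x\<close>-coordinate has exact denominator \<open>4\<^sup>j\<^sup>+\<^sup>1\<close> at 2,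
  so these points are pairwise distinct: \<open>P\<close> has infinite order.\<close>

definition doubling_seq :: "nat \<Rightarrow> rpoint" where
  "doubling_seq j = ((\<lambda>R. E1_add R R) ^^ j) (E1_add P_pt P_pt)"

lemma E1_add_P_P: "E1_add P_pt P_pt = Some (1/4, 15/8)"
  by (simp add: P_pt_def E1_add_def Let_def power2_eq_square)

lemma sq_class_x_2P: "sq_class 1 1 1 (1/4)"
  unfolding sq_class_def
  by (intro conjI exI[of _ "1/2"] exI[of _ "3/2"] exI[of _ "5/2"]) (simp_all add: power2_eq_square)

lemma E1_double_x:
  assumes "y^2 = E1_cubic x" "E1_add (Some (x, y)) (Some (x, y)) = Some (x3, y3)"
  shows "x3 = (x^2 - 12)^2 / (4 * E1_cubic x)"
proof -
  have y: "y \<noteq> 0" using assms(2) by (auto simp: E1_add_def)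
  hence c: "E1_cubic x \<noteq> 0" using assms(1) by auto
  define l where "l = E1_cubic_deriv x / (2 * y)"
  have "x3 = l^2 - 8 - x - x" using assms(2) E1_add_tangent[OF y l_def refl] by simp
  also have "l^2 = E1_cubic_deriv x ^ 2 / (4 * E1_cubic x)"
    unfolding l_def using assms(1) by (simp add: power_divide power_mult_distrib)
  finally show ?thesis using c
    by (simp add: field_simps E1_cubic_deriv_def) (simp add: E1_cubic_def algebra_simps power2_eq_square)
qed

lemma E1_double_x_fraction:
  fixes a b K :: rat
  assumes "a \<noteq> 0" "b \<noteq> 0" "K \<noteq> 0" "a + 2 * K * b \<noteq> 0" "a + 6 * K * b \<noteq> 0"
  shows "((a / (K * b))^2 - 12)^2 / (4 * E1_cubic (a / (K * b))) =
     (a^2 - 12 * K^2 * b^2)^2 / (4 * K * (b * a * (a + 2 * K * b) * (a + 6 * K * b)))"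
proof -
  have c: "E1_cubic (a / (K * b)) = a * (a + 2 * K * b) * (a + 6 * K * b) / (K * b)^3"
    using assms by (simp add: E1_cubic_def field_simps power3_eq_cube)
  have n: "(a / (K * b))^2 - 12 = (a^2 - 12 * K^2 * b^2) / (K * b)^2"
    using assms by (simp add: field_simps power2_eq_square)
  have "(N / (K * b)^2)^2 / (4 * (a * A * B / (K * b)^3)) = N^2 / (4 * K * (b * a * A * B))"
    if "A \<noteq> 0" "B \<noteq> 0" for N A B
    using assms(1-3) that by (simp add: field_simps power2_eq_square power3_eq_cube)
  thus ?thesis unfolding c n using assms(4,5) by blast
qed

lemma doubling_seq_x_form:
  "\<exists>x y a b. doubling_seq j = Some (x, y) \<and> y^2 = E1_cubic x \<and> sq_class 1 1 1 x \<and>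
     odd a \<and> odd b \<and> x = of_int a / (of_int (4 ^ Suc j) * of_int b)"
proof (induction j)
  case 0
  have "doubling_seq 0 = Some (1/4, 15/8)" by (simp add: doubling_seq_def E1_add_P_P)
  moreover have "(15/8)^2 = E1_cubic (1/4)" by (simp add: E1_cubic_def power2_eq_square)
  moreover have "(1/4 :: rat) = of_int 1 / (of_int (4 ^ Suc 0) * of_int 1)" by simp
  ultimately show ?case using sq_class_x_2P odd_one by blast
next
  case (Suc j)
  then obtain x y a b where IH: "doubling_seq j = Some (x, y)" "y^2 = E1_cubic x" "sq_class 1 1 1 x"
      "odd a" "odd b" "x = of_int a / (of_int (4 ^ Suc j) * of_int b)"
    by blast
  have y: "y \<noteq> 0" using IH(2,3) sq_class_1_1_1_cubic_nonzero by auto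
  obtain x3 y3 where sum: "E1_add (Some (x, y)) (Some (x, y)) = Some (x3, y3)"
    using E1_add_tangent[OF y refl refl] by blast
  have seq: "doubling_seq (Suc j) = Some (x3, y3)" using IH(1) sum by (simp add: doubling_seq_def)
  define K :: int where "K = 4 ^ Suc j"
  define A where "A = a + 2 * K * b"
  define B where "B = a + 6 * K * b"
  define N where "N = a^2 - 12 * K^2 * b^2"
  have "even K" unfolding K_def by simp
  hence odd: "odd A" "odd B" "odd (N^2)" "odd (b * a * A * B)"
    unfolding A_def B_def N_def using IH(4,5) by simp_all
  have "(of_int A :: rat) \<noteq> 0" "(of_int B :: rat) \<noteq> 0" using odd(1,2) by auto
  hence "(of_int a :: rat) \<noteq> 0" "(of_int b :: rat) \<noteq> 0" "(of_int K :: rat) \<noteq> 0"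
      "of_int a + 2 * of_int K * of_int b \<noteq> (0 :: rat)" "of_int a + 6 * of_int K * of_int b \<noteq> (0 :: rat)"
    using IH(4,5) unfolding A_def B_def by (auto simp: K_def)
  note double = E1_double_x_fraction[OF this]
  have "x3 = (x^2 - 12)^2 / (4 * E1_cubic x)" by (rule E1_double_x[OF IH(2) sum])
  also have "\<dots> = of_int (N^2) / (of_int (4 ^ Suc (Suc j)) * of_int (b * a * A * B))"
    unfolding IH(6) K_def[symmetric] double by (simp add: N_def A_def B_def K_def)
  finally have "x3 = of_int (N^2) / (of_int (4 ^ Suc (Suc j)) * of_int (b * a * A * B))" .
  moreover have "y3^2 = E1_cubic x3"
    using E1_add_in_E1_points[of "Some (x, y)" "Some (x, y)"] IH(2) sum by simp
  moreover have "sq_class 1 1 1 x3"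
    using sq_class_add[OF IH(2) IH(2) sum IH(3) IH(3)] sq_class_1_1_1_cubic_nonzero[OF IH(3)] by simp
  ultimately show ?case using seq odd by blast
qed

lemma doubling_seq_in_E1_points:
  obtains x y where "doubling_seq j = Some (x, y)" "y^2 = E1_cubic x" "sq_class 1 1 1 x"
  using doubling_seq_x_form[of j] by blast

lemma inj_doubling_seq: "inj doubling_seq"
proof -
  have "doubling_seq i \<noteq> doubling_seq j" if "i < j" for i j
  proof
    assume eq: "doubling_seq i = doubling_seq j"
    obtain x y a b where i: "doubling_seq i = Some (x, y)" "odd a" "odd b"
        "x = of_int a / (of_int (4 ^ Suc i) * of_int b)"
      using doubling_seq_x_form[of i] by blast
    obtain x' y' a' b' where j: "doubling_seq j = Some (x', y')" "odd a'" "odd b'"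
        "x' = of_int a' / (of_int (4 ^ Suc j) * of_int b')"
      using doubling_seq_x_form[of j] by blast
    have "x = x'" using i(1) j(1) eq by simp
    hence "a * (4 ^ Suc j * b') = a' * (4 ^ Suc i * b)"
      using of_int_frac_eq_imp_cross_eq[of "4 ^ Suc i * b" "4 ^ Suc j * b'" a a'] i j by auto
    moreover have "(4::int) ^ Suc j = 4 ^ Suc i * 4 ^ (j - i)" using that by (simp flip: power_add)
    ultimately have "a * 4 ^ (j - i) * b' = a' * b" by (simp add: ac_simps)
    moreover have "even (a * 4 ^ (j - i) * b')" using that by simp
    ultimately show False using i(3) j(2) by simp
  qed
  thus ?thesis by (metis injI linorder_neqE_nat)
qed

section \<open>Reduction modulo \<open>q\<close>\<close>

text \<open>In the coordinates \<open>z = 1/x\<close>, \<open>w = y/x\<^sup>2\<close> at the point at infinity, adding a point \<open>(xk, yk)\<close>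
  to \<open>(a, b)\<close> moves the \<open>x\<close>-coordinate by a multiple of \<open>z\<close>.\<close>

lemma E1_chord_x_local_coordinates:
  assumes "b^2 = E1_cubic a" "yk^2 = E1_cubic xk" "a \<noteq> xk" "xk \<noteq> 0"
    and "E1_add (Some (a, b)) (Some (xk, yk)) = Some (x3, y3)"
  defines "z \<equiv> 1 / xk" and "w \<equiv> yk / xk^2"
  shows "(x3 - a) * (1 - a * z)^2 = E1_cubic_deriv a * z - 2 * b * w + (12 * a - a^3) * z^2"
    and "w^2 = z * (1 + 2 * z) * (1 + 6 * z)"
proof -
  define l where "l = (yk - b) / (xk - a)"
  have x3: "x3 = l^2 - 8 - a - xk" using assms(5) E1_add_chord[OF assms(3) l_def refl] by simp
  have xz: "xk * z = 1" unfolding z_def using assms(4) by simp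
  have w: "w = yk * z^2" unfolding w_def z_def by (simp add: power_divide)
  have "l * (xk - a) = yk - b" using assms(3) unfolding l_def by simp
  hence "(x3 - a) * (xk - a)^2 = (yk - b)^2 - (8 + 2 * a + xk) * (xk - a)^2"
    unfolding x3 by (simp add: algebra_simps power2_eq_square flip: \<open>l * (xk - a) = yk - b\<close>)
  also have "\<dots> = E1_cubic_deriv a * xk - 2 * b * yk + (12 * a - a^3)"
    using assms(1,2) by (simp add: E1_cubic_def E1_cubic_deriv_def algebra_simps power2_eq_square power3_eq_cube)
  finally have chord: "(x3 - a) * (xk - a)^2 = E1_cubic_deriv a * xk - 2 * b * yk + (12 * a - a^3)" .
  have "(xk - a) * z = 1 - a * z" using xz by (simp add: algebra_simps)
  hence "(x3 - a) * (1 - a * z)^2 = ((x3 - a) * (xk - a)^2) * z^2"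
    by (metis mult.assoc power_mult_distrib)
  also have "\<dots> = E1_cubic_deriv a * (xk * z) * z - 2 * b * w + (12 * a - a^3) * z^2"
    unfolding chord w by (simp add: algebra_simps power2_eq_square)
  finally show "(x3 - a) * (1 - a * z)^2 = E1_cubic_deriv a * z - 2 * b * w + (12 * a - a^3) * z^2"
    unfolding xz by simp
  have "w^2 = yk^2 * z^4" unfolding w by (simp add: power_mult_distrib flip: power_mult)
  also have "\<dots> = (xk * z) * ((xk * z + 2 * z) * (xk * z + 6 * z)) * z"
    unfolding assms(2) by (simp add: E1_cubic_def algebra_simps power2_eq_square power4_eq_xxxx)
  finally have "w^2 = (xk * z) * ((xk * z + 2 * z) * (xk * z + 6 * z)) * z" .
  thus "w^2 = z * (1 + 2 * z) * (1 + 6 * z)" unfolding xz by (simp add: algebra_simps)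
qed

context
  fixes q :: int
  assumes prime_q: "prime q"
begin

lemma integral_at_y:
  assumes "y^2 = E1_cubic x" "integral_at q x" shows "integral_at q y"
proof -
  have "integral_at q (x * (x + 2) * (x + 6))" using assms(2) by (intro integral_at_intros[OF prime_q])
  thus ?thesis using assms(1) integral_at_square_imp[OF prime_q] by (simp add: E1_cubic_def)
qed

lemma not_zero_at_1: "\<not> zero_at q 1"
  using zero_at_of_int_iff[OF prime_q, of 1] prime_not_dvd_1[OF prime_q] by simp

lemma E1_add_kernel_x_congruent:
  assumes "b^2 = E1_cubic a" "integral_at q a" "yk^2 = E1_cubic xk" "\<not> integral_at q xk"
  obtains x3 y3 where "E1_add (Some (a, b)) (Some (xk, yk)) = Some (x3, y3)" "zero_at q (x3 - a)"
proof -
  note ints = integral_at_intros[OF prime_q]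
  have ne: "a \<noteq> xk" and xk: "xk \<noteq> 0" using assms(2,4) integral_at_0[OF prime_q] by auto
  obtain x3 y3 where sum: "E1_add (Some (a, b)) (Some (xk, yk)) = Some (x3, y3)"
    using E1_add_chord[OF ne refl refl] by blast
  define z where "z = 1 / xk"
  define w where "w = yk / xk^2"
  note local = E1_chord_x_local_coordinates[OF assms(1,3) ne xk sum, folded z_def w_def]
  have z: "zero_at q z" unfolding z_def by (rule zero_at_inverse_of_not_integral_at[OF prime_q assms(4)])
  have zi: "integral_at q z" by (rule zero_at_imp_integral_at[OF z])
  have "zero_at q (z * ((1 + 2 * z) * (1 + 6 * z)))"
    by (intro zero_at_mult_left[OF prime_q z] ints zi)
  hence w: "zero_at q w"
    using local(2) zero_at_square_imp[OF prime_q] by (simp add: mult.assoc)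
  have zz: "zero_at q (z^2)" unfolding power2_eq_square by (rule zero_at_mult_left[OF prime_q z zi])
  have "zero_at q (E1_cubic_deriv a * z - 2 * b * w + (12 * a - a^3) * z^2)"
    using integral_at_y[OF assms(1,2)] assms(2)
    by (intro zero_at_add[OF prime_q] zero_at_diff[OF prime_q] zero_at_mult_right[OF prime_q] z w zz)
      (auto simp: E1_cubic_deriv_def intro: ints)
  hence N: "zero_at q ((x3 - a) * (1 - a * z)^2)" unfolding local(1) .
  have "zero_at q (- (a * z))" by (intro zero_at_minus[OF prime_q] zero_at_mult_right[OF prime_q assms(2) z])
  hence "\<not> zero_at q (1 + - (a * z))" by (rule not_zero_at_add[OF prime_q not_zero_at_1])
  hence u: "\<not> zero_at q (1 - a * z)" by simp
  have ui: "integral_at q (1 - a * z)" by (intro ints assms(2) zi)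
  have "\<not> zero_at q ((1 - a * z)^2)"
    unfolding power2_eq_square by (rule not_zero_at_mult[OF prime_q ui u ui u])
  moreover have "integral_at q ((1 - a * z)^2)" by (intro ints ui)
  ultimately have "zero_at q ((x3 - a) * (1 - a * z)^2 / (1 - a * z)^2)"
    using zero_at_divide[OF prime_q N] by blast
  moreover have "(1 - a * z)^2 \<noteq> 0" using \<open>\<not> zero_at q ((1 - a * z)^2)\<close> zero_at_0[OF prime_q] by auto
  ultimately show ?thesis using that[OF sum] by simp
qed

lemma not_integral_at_square_diff:
  assumes "\<not> integral_at q l" "integral_at q c" shows "\<not> integral_at q (l^2 - c)"
proof
  assume "integral_at q (l^2 - c)"
  hence "integral_at q (l^2 - c + c)" using integral_at_add[OF prime_q _ assms(2)] by blast
  thus False using integral_at_square_imp[OF prime_q] assms(1) by simp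
qed

lemma red_Some: "red q (Some (x, y)) = (if integral_at q x then Some (rat_red q x, rat_red q y) else None)"
  unfolding red_def integral_at_iff_denominator[OF prime_q] by simp

lemma finite_red_E1_points: "finite (red q ` E1_points)"
proof (rule finite_subset)
  show "red q ` E1_points \<subseteq> insert None (Some ` ({0..<q} \<times> {0..<q}))"
  proof
    fix R assume "R \<in> red q ` E1_points"
    then obtain P where P: "P \<in> E1_points" "R = red q P" by blast
    show "R \<in> insert None (Some ` ({0..<q} \<times> {0..<q}))"
    proof (cases P)
      case (Some p)
      then obtain x y where "P = Some (x, y)" "y^2 = E1_cubic x" using P(1) by (cases p) auto
      thus ?thesis using P(2) rat_red_bounds_zero_at[OF prime_q] integral_at_y
        by (auto simp: red_Some)
    qed (use P in \<open>simp add: red_def\<close>)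
  qed
qed simp

lemma same_red_imp_zero_at_diff:
  assumes "red q (Some (x1, y1)) = red q (Some (x2, y2))" "y1^2 = E1_cubic x1" "y2^2 = E1_cubic x2"
    and "integral_at q x1"
  shows "integral_at q x2" "zero_at q (x1 - x2)" "zero_at q (y1 - y2)"
proof -
  show x2: "integral_at q x2" using assms(1,4) by (auto simp: red_Some split: if_splits)
  have y: "integral_at q y1" "integral_at q y2" using integral_at_y assms(2-4) x2 by blast+
  have eq: "rat_red q x1 = rat_red q x2" "rat_red q y1 = rat_red q y2"
    using assms(1,4) x2 by (simp_all add: red_Some)
  show "zero_at q (x1 - x2)"
    using zero_at_diff[OF prime_q rat_red_bounds_zero_at(3)[OF prime_q assms(4)]
        rat_red_bounds_zero_at(3)[OF prime_q x2]] eq(1) by simp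
  show "zero_at q (y1 - y2)"
    using zero_at_diff[OF prime_q rat_red_bounds_zero_at(3)[OF prime_q y(1)]
        rat_red_bounds_zero_at(3)[OF prime_q y(2)]] eq(2) by simp
qed

lemma infinite_same_reduction_doublings:
  obtains i where "infinite {j. red q (doubling_seq j) = red q (doubling_seq i)}"
proof -
  have "doubling_seq j \<in> E1_points" for j
    by (rule doubling_seq_in_E1_points[of j]) simp
  hence "range (red q \<circ> doubling_seq) \<subseteq> red q ` E1_points" by auto
  hence "finite (range (red q \<circ> doubling_seq))" using finite_red_E1_points finite_subset by blast
  thus ?thesis using that pigeonhole_infinite[of UNIV "red q \<circ> doubling_seq"] by auto
qed

lemma H_set_point_near_minus_18:
  assumes "\<exists>Q \<in> red q ` H_set. \<exists>a b. Q = Some (a, b) \<and> [a = -18] (mod q)"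
  obtains x y where "y^2 = E1_cubic x" "sq_class 6 2 3 x" "integral_at q x" "zero_at q (x + 18)"
proof -
  obtain k a b where k: "odd k" "red q (E1_mul k P_pt) = Some (a, b)" "[a = -18] (mod q)"
    using assms unfolding H_set_def by auto
  obtain x y where xy: "E1_mul k P_pt = Some (x, y)" "y^2 = E1_cubic x" "sq_class 6 2 3 x"
    by (rule E1_mul_P_odd[OF k(1)])
  have x: "integral_at q x" and a: "a = rat_red q x"
    using k(2) unfolding xy(1) red_Some by (simp_all split: if_splits)
  have "zero_at q (x - of_int a)" using rat_red_bounds_zero_at(3)[OF prime_q x] a by simp
  moreover have "q dvd a + 18" using k(3) by (simp add: cong_iff_dvd_diff)
  hence "zero_at q (of_int (a + 18))" by (simp only: zero_at_of_int_iff[OF prime_q])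
  ultimately have "zero_at q (x - of_int a + of_int (a + 18))" by (rule zero_at_add[OF prime_q])
  thus ?thesis using that xy(2,3) x by simp
qed

end

context
  fixes q :: int
  assumes prime_q: "prime q" and q_gt_3: "q > 3"
begin

lemma not_dvd_divisor_24: "k dvd 24 \<Longrightarrow> \<not> q dvd k"
proof
  assume "k dvd 24" "q dvd k"
  hence "q dvd 2 ^ 3 * 3" using dvd_trans[of q k 24] by simp
  hence "q dvd 2 ^ 3 \<or> q dvd 3" using prime_dvd_mult_iff[OF prime_q] by blast
  hence "q dvd 2 \<or> q dvd 3" using prime_dvd_power[OF prime_q] by blast
  hence "q \<le> 3" using zdvd_imp_le[of q 2] zdvd_imp_le[of q 3] by linarith
  thus False using q_gt_3 by simp
qed

lemma not_zero_at_divisor_24: "k dvd 24 \<Longrightarrow> \<not> zero_at q (of_int k)"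
  using zero_at_of_int_iff[OF prime_q] not_dvd_divisor_24 by blast

text \<open>The roots \<open>0, -2, -6\<close> of the cubic stay distinct modulo \<open>q > 3\<close>, so a point with
  \<open>y \<equiv> 0\<close> has a tangent of non-integral slope.\<close>

lemma E1_cubic_deriv_unit:
  assumes "y^2 = E1_cubic x" "integral_at q x" "zero_at q y"
  shows "\<not> zero_at q (E1_cubic_deriv x)"
proof -
  note ints = integral_at_intros[OF prime_q]
  have near_root: "\<not> zero_at q (E1_cubic_deriv x)"
    if "zero_at q (x - of_int r)" "E1_cubic_deriv (of_int r) = of_int k" "k dvd 24" for r k
  proof -
    have "integral_at q (3 * x + 3 * of_int r + 16)"
      by (intro ints assms(2) integral_at_of_int[OF prime_q])
    hence "zero_at q ((x - of_int r) * (3 * x + 3 * of_int r + 16))"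
      by (rule zero_at_mult_left[OF prime_q that(1)])
    hence unit: "\<not> zero_at q (of_int k + (x - of_int r) * (3 * x + 3 * of_int r + 16))"
      by (rule not_zero_at_add[OF prime_q not_zero_at_divisor_24[OF that(3)]])
    have "E1_cubic_deriv x = E1_cubic_deriv (of_int r) + (x - of_int r) * (3 * x + 3 * of_int r + 16)"
      by (simp add: E1_cubic_deriv_def algebra_simps power2_eq_square)
    also have "\<dots> = of_int k + (x - of_int r) * (3 * x + 3 * of_int r + 16)" by (simp only: that(2))
    finally have eq: "E1_cubic_deriv x = of_int k + (x - of_int r) * (3 * x + 3 * of_int r + 16)" .
    show ?thesis unfolding eq by (fact unit)
  qed
  have x: "integral_at q x" "integral_at q (x + 2)" "integral_at q (x + 6)"
    using assms(2) ints by auto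
  have "zero_at q (y * y)" by (rule zero_at_mult_left[OF prime_q assms(3) zero_at_imp_integral_at[OF assms(3)]])
  hence "zero_at q (x * (x + 2) * (x + 6))" using assms(1) by (simp add: E1_cubic_def power2_eq_square)
  hence "zero_at q (x * (x + 2)) \<or> zero_at q (x + 6)"
    by (rule zero_at_mult_cases[OF prime_q integral_at_mult[OF prime_q x(1,2)] x(3)])
  hence "zero_at q (x - of_int 0) \<or> zero_at q (x - of_int (- 2)) \<or> zero_at q (x - of_int (- 6))"
    using zero_at_mult_cases[OF prime_q x(1,2)] by auto
  thus ?thesis
  proof (elim disjE)
    show "zero_at q (x - of_int 0) \<Longrightarrow> ?thesis"
      by (erule near_root[of 0 12]) (simp_all add: E1_cubic_deriv_def)
    show "zero_at q (x - of_int (- 2)) \<Longrightarrow> ?thesis"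
      by (erule near_root[of "- 2" "- 8"]) (simp_all add: E1_cubic_deriv_def power2_eq_square)
    show "zero_at q (x - of_int (- 6)) \<Longrightarrow> ?thesis"
      by (erule near_root[of "- 6" 24]) (simp_all add: E1_cubic_deriv_def power2_eq_square)
  qed
qed

lemma not_zero_at_2: "\<not> zero_at q 2"
  using not_zero_at_divisor_24[of 2] by simp

text \<open>If \<open>y1 \<not>\<equiv> 0\<close> the numerator \<open>y2 + y1 \<equiv> 2 y1\<close> is a unit. Otherwise it is rewritten
  as \<open>(x2 - x1) g / (y2 - y1)\<close> with \<open>g \<equiv> E1_cubic_deriv x1\<close> a unit.\<close>

lemma chord_slope_not_integral_at:
  assumes "y1^2 = E1_cubic x1" "y2^2 = E1_cubic x2" "integral_at q x1" "integral_at q x2"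
    and "zero_at q (x2 - x1)" "zero_at q (y2 - y1)" "x1 \<noteq> x2"
  shows "\<not> integral_at q ((y2 + y1) / (x2 - x1))"
proof (cases "zero_at q y1")
  case False
  note ints = integral_at_intros[OF prime_q]
  have yi: "integral_at q y1" by (rule integral_at_y[OF prime_q assms(1,3)])
  have "\<not> zero_at q (2 * y1)"
    by (rule not_zero_at_mult[OF prime_q integral_at_numeral[OF prime_q] not_zero_at_2 yi(1) False])
  hence "\<not> zero_at q (2 * y1 + (y2 - y1))" by (rule not_zero_at_add[OF prime_q _ assms(6)])
  hence "\<not> integral_at q ((2 * y1 + (y2 - y1)) / (x2 - x1))"
    using not_integral_at_divide[OF prime_q _ assms(5)] assms(7) by simp
  thus ?thesis by (simp add: algebra_simps)
next
  case True
  note ints = integral_at_intros[OF prime_q]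
  define g where "g = x1^2 + x1 * x2 + x2^2 + 8 * (x1 + x2) + 12"
  have "zero_at q ((x2 - x1) * (x2 + 2 * x1 + 8))"
    by (intro zero_at_mult_left[OF prime_q assms(5)] ints assms(3,4))
  hence "\<not> zero_at q (E1_cubic_deriv x1 + (x2 - x1) * (x2 + 2 * x1 + 8))"
    by (rule not_zero_at_add[OF prime_q E1_cubic_deriv_unit[OF assms(1,3) True]])
  moreover have "E1_cubic_deriv x1 + (x2 - x1) * (x2 + 2 * x1 + 8) = g"
    unfolding g_def E1_cubic_deriv_def by (simp add: algebra_simps power2_eq_square)
  ultimately have gu: "\<not> zero_at q g" by simp
  have gi: "integral_at q g" unfolding g_def by (intro ints assms(3,4))
  have fac: "(y2 + y1) * (y2 - y1) = (x2 - x1) * g"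
  proof -
    have "(y2 + y1) * (y2 - y1) = y2^2 - y1^2" by (simp add: algebra_simps power2_eq_square)
    also have "\<dots> = (x2 - x1) * g"
      unfolding assms(1,2) g_def by (simp add: E1_cubic_def algebra_simps power2_eq_square)
    finally show ?thesis .
  qed
  have "g \<noteq> 0" using gu zero_at_0[OF prime_q] by auto
  hence "y2 - y1 \<noteq> 0" using fac assms(7) by auto
  hence "(y2 + y1) / (x2 - x1) = g / (y2 - y1)" using fac assms(7) by (simp add: field_simps)
  thus ?thesis using not_integral_at_divide[OF prime_q gu assms(6) \<open>y2 - y1 \<noteq> 0\<close>] by simp
qed

lemma E1_add_neg_same_reduction:
  assumes "y1^2 = E1_cubic x1" "y2^2 = E1_cubic x2" "integral_at q x1" "integral_at q x2"
    and "zero_at q (x1 - x2)" "zero_at q (y1 - y2)" "(x1, y1) \<noteq> (x2, y2)"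
  obtains x3 y3 where "E1_add (Some (x1, - y1)) (Some (x2, y2)) = Some (x3, y3)" "\<not> integral_at q x3"
proof -
  have diffs: "zero_at q (x2 - x1)" "zero_at q (y2 - y1)"
    using zero_at_minus[OF prime_q assms(5)] zero_at_minus[OF prime_q assms(6)] by simp_all
  obtain l y3 where sum: "E1_add (Some (x1, - y1)) (Some (x2, y2)) = Some (l^2 - 8 - x1 - x2, y3)"
    and l: "\<not> integral_at q l"
  proof (cases "x1 = x2")
    case True
    hence y2: "y2 = - y1" and y1: "- y1 \<noteq> 0"
      using assms(7) E1_same_x_imp[OF assms(1), of y2] assms(2) by auto
    have "zero_at q (2 * y1)" using zero_at_minus[OF prime_q diffs(2)] y2 by simp
    hence "zero_at q (2 * y1 / 2)"
      by (rule zero_at_divide[OF prime_q _ integral_at_numeral[OF prime_q] not_zero_at_2])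
    hence "zero_at q y1" by simp
    hence "zero_at q (2 * - y1)"
      by (intro zero_at_mult_right[OF prime_q integral_at_numeral[OF prime_q]] zero_at_minus[OF prime_q])
    moreover have "2 * - y1 \<noteq> 0" using y1 by simp
    ultimately have "\<not> integral_at q (E1_cubic_deriv x1 / (2 * - y1))"
      by (rule not_integral_at_divide[OF prime_q E1_cubic_deriv_unit[OF assms(1,3) \<open>zero_at q y1\<close>]])
    with E1_add_tangent[OF y1 refl refl, of x1] show ?thesis
      using that True y2 by blast
  next
    case False
    have "y2 - - y1 = y2 + y1" by simp
    with E1_add_chord[OF False refl refl, of "- y1" y2] show ?thesis
      using that chord_slope_not_integral_at[OF assms(1-4) diffs False] by metis
  qed
  have "integral_at q (8 + x1 + x2)" by (intro integral_at_intros[OF prime_q] assms(3,4))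
  hence "\<not> integral_at q (l^2 - (8 + x1 + x2))" by (rule not_integral_at_square_diff[OF prime_q l])
  hence "\<not> integral_at q (l^2 - 8 - x1 - x2)" by (simp only: diff_diff_eq add.assoc not_False_eq_True)
  thus ?thesis by (rule that[OF sum])
qed

lemma E1_add_neg_same_reduction_kernel:
  assumes "y1^2 = E1_cubic x1" "y2^2 = E1_cubic x2" "sq_class 1 1 1 x1" "sq_class 1 1 1 x2"
    and "integral_at q x1" "red q (Some (x1, y1)) = red q (Some (x2, y2))" "(x1, y1) \<noteq> (x2, y2)"
  obtains x3 y3 where "E1_add (Some (x1, - y1)) (Some (x2, y2)) = Some (x3, y3)"
    "y3^2 = E1_cubic x3" "\<not> integral_at q x3" "sq_class 1 1 1 x3"
proof -
  obtain x3 y3 where sum: "E1_add (Some (x1, - y1)) (Some (x2, y2)) = Some (x3, y3)"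
      and x3: "\<not> integral_at q x3"
    using E1_add_neg_same_reduction[OF assms(1,2,5)
        same_red_imp_zero_at_diff[OF prime_q assms(6,1,2,5)] assms(7)] by blast
  have on: "(- y1)^2 = E1_cubic x1" "y2^2 = E1_cubic x2" using assms(1,2) by simp_all
  have "y3^2 = E1_cubic x3"
    using E1_add_in_E1_points[of "Some (x1, - y1)" "Some (x2, y2)"] on sum by simp
  moreover have "sq_class 1 1 1 x3"
    using sq_class_add[OF on sum assms(3,4)] sq_class_1_1_1_cubic_nonzero assms(3,4) by simp
  ultimately show ?thesis using that sum x3 by blast
qed

lemma infinite_kernel_points:
  "infinite {(x, y). y^2 = E1_cubic x \<and> \<not> integral_at q x \<and> sq_class 1 1 1 x}"
  (is "infinite ?S")
proof -
  obtain i where J: "infinite {j. red q (doubling_seq j) = red q (doubling_seq i)}"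
    by (rule infinite_same_reduction_doublings[OF prime_q])
  define J where "J = {j. red q (doubling_seq j) = red q (doubling_seq i)} - {i}"
  obtain xi yi where i: "doubling_seq i = Some (xi, yi)" "yi^2 = E1_cubic xi" "sq_class 1 1 1 xi"
    by (rule doubling_seq_in_E1_points)
  define K where "K j = (if integral_at q xi then E1_add (Some (xi, - yi)) (doubling_seq j) else doubling_seq j)"
    for j
  have K: "K j \<in> Some ` ?S" if "j \<in> J" for j
  proof -
    obtain xj yj where j: "doubling_seq j = Some (xj, yj)" "yj^2 = E1_cubic xj" "sq_class 1 1 1 xj"
      by (rule doubling_seq_in_E1_points)
    have red: "red q (Some (xi, yi)) = red q (Some (xj, yj))" using that i j unfolding J_def by simp
    show ?thesis
    proof (cases "integral_at q xi")
      case True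
      have "doubling_seq i \<noteq> doubling_seq j" using that inj_doubling_seq unfolding J_def inj_def by blast
      hence "(xi, yi) \<noteq> (xj, yj)" using i(1) j(1) by simp
      then obtain x3 y3 where "E1_add (Some (xi, - yi)) (Some (xj, yj)) = Some (x3, y3)"
          "y3^2 = E1_cubic x3" "\<not> integral_at q x3" "sq_class 1 1 1 x3"
        using E1_add_neg_same_reduction_kernel[OF i(2) j(2) i(3) j(3) True red] by blast
      thus ?thesis using True j(1) unfolding K_def by auto
    next
      case False
      hence "\<not> integral_at q xj" using red by (simp add: red_Some[OF prime_q] split: if_splits)
      thus ?thesis using False j unfolding K_def by auto
    qed
  qed
  have "doubling_seq j \<in> E1_points" for j by (rule doubling_seq_in_E1_points[of j]) simp
  hence "E1_add (Some (xi, yi)) (K j) = doubling_seq j" if "integral_at q xi" for j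
    using E1_add_neg_cancel[of "Some (xi, - yi)" "doubling_seq j"] i(2) that unfolding K_def by simp
  hence "doubling_seq j = doubling_seq j'" if "K j = K j'" for j j'
    using that unfolding K_def by (cases "integral_at q xi") metis+
  hence "inj K" using inj_doubling_seq unfolding inj_def by blast
  moreover have "infinite J" unfolding J_def using J by simp
  ultimately have "infinite (K ` J)" using finite_imageD inj_on_subset by blast
  hence "infinite (Some ` ?S)" using K by (meson finite_subset image_subsetI)
  thus ?thesis by blast
qed

end

section \<open>Points on \<open>C\<^sub>D\<close>\<close>

lemma infinite_E1_x_coordinates:
  assumes "infinite S" "\<And>x y. (x, y) \<in> S \<Longrightarrow> y^2 = E1_cubic x"
  shows "infinite (fst ` S)"
proof
  assume fin: "finite (fst ` S)"
  define sign where "sign p = (fst p, snd p \<ge> 0)" for p :: "rat \<times> rat"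
  have "inj_on sign S"
  proof (rule inj_onI)
    fix p p' assume p: "p \<in> S" "p' \<in> S" "sign p = sign p'"
    obtain x y x' y' where xy: "p = (x, y)" "p' = (x', y')" by fastforce
    have x: "x' = x" and sg: "(y \<ge> 0) = (y' \<ge> 0)" using p(3) unfolding xy sign_def by simp_all
    have "y'^2 = E1_cubic x" "y^2 = E1_cubic x" using assms(2) p(1,2) unfolding xy x by blast+
    hence "y' = y \<or> y' = - y" by (rule E1_same_x_imp[rotated])
    hence "y' = y" using sg by auto
    thus "p = p'" unfolding xy x by simp
  qed
  moreover have "sign ` S \<subseteq> fst ` S \<times> UNIV" unfolding sign_def by auto
  hence "finite (sign ` S)" by (rule finite_subset) (simp add: fin)
  ultimately show False using assms(1) finite_imageD by blast
qed

lemma rat_triple_common_denominator: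
  fixes u v w :: rat
  obtains a b c d where "u = of_int a / of_int d" "v = of_int b / of_int d" "w = of_int c / of_int d"
    "d > 0" "gcd a (gcd b (gcd c d)) = 1"
proof -
  obtain n0 d0 n1 d1 n2 d2 where nd: "u = of_int n0 / of_int d0" "d0 > 0"
      "v = of_int n1 / of_int d1" "d1 > 0" "w = of_int n2 / of_int d2" "d2 > 0"
    by (metis rat_coprime_frac)
  define a' where "a' = n0 * d1 * d2"
  define b' where "b' = n1 * d0 * d2"
  define c' where "c' = n2 * d0 * d1"
  define d' where "d' = d0 * d1 * d2"
  have d': "d' > 0" unfolding d'_def using nd by simp
  have uA: "u = of_int a' / of_int d'" "v = of_int b' / of_int d'" "w = of_int c' / of_int d'"
    unfolding a'_def b'_def c'_def d'_def nd(1,3,5) using nd(2,4,6) by simp_all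
  define g where "g = gcd a' (gcd b' (gcd c' d'))"
  have g: "g > 0" unfolding g_def using d' by (simp add: gcd_pos_int)
  have gd: "g dvd a'" "g dvd b'" "g dvd c'" "g dvd d'" unfolding g_def
    by (meson gcd_dvd1 gcd_dvd2 dvd_trans)+
  then obtain a b c d where abcd: "a' = g * a" "b' = g * b" "c' = g * c" "d' = g * d"
    by (metis dvdE)
  have "gcd a' (gcd b' (gcd c' d')) = g * gcd a (gcd b (gcd c d))"
    unfolding abcd using g by (simp add: gcd_mult_left abs_of_pos)
  hence "gcd a (gcd b (gcd c d)) = 1" using g d' unfolding g_def by simp
  moreover have "d > 0" using d' g abcd(4) by (simp add: zero_less_mult_iff)
  moreover have "u = of_int a / of_int d" "v = of_int b / of_int d" "w = of_int c / of_int d"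
    using uA g unfolding abcd by simp_all
  ultimately show ?thesis by (intro that)
qed

text \<open>Writing \<open>D x\<^sub>3\<^sup>2 = 2 x\<^sub>2\<^sup>2 - x\<^sub>1\<^sup>2\<close>, the equations of \<open>C\<^sub>D\<close> reduce to two equations not involving \<open>D\<close>.\<close>

lemma C_point_of_integer_solution:
  fixes x0 x1 x2 x4 :: int
  assumes "x0^2 - 2 * x1^2 + x2^2 = 0" "2 * x1^2 - 3 * x2^2 + x4^2 = 0"
    and "gcd x0 (gcd x1 (gcd x2 x4)) = 1"
  obtains D x3 where "squarefree D" "primitive5 (x0, x1, x2, x3, x4)" "C_eqs D (x0, x1, x2, x3, x4)"
    "D * x3^2 = 2 * x2^2 - x1^2"
proof -
  define D where "D = squarefree_part (2 * x2^2 - x1^2)"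
  define x3 where "x3 = square_part (2 * x2^2 - x1^2)"
  have D: "D * x3^2 = 2 * x2^2 - x1^2" unfolding D_def x3_def by (rule squarefree_decompose[symmetric])
  have "C_eqs D (x0, x1, x2, x3, x4)" unfolding C_eqs_def using assms(1,2) D
    by (simp add: algebra_simps)
  moreover have "gcd x0 (gcd x1 (gcd x2 (gcd x3 x4))) dvd gcd x0 (gcd x1 (gcd x2 x4))"
    by (meson dvd_trans gcd_dvd1 gcd_dvd2 gcd_greatest)
  hence "primitive5 (x0, x1, x2, x3, x4)" unfolding primitive5_def using assms(3) by simp
  moreover have "squarefree D" unfolding D_def by simp
  ultimately show ?thesis using that D by blast
qed

definition C_pairs :: "int \<Rightarrow> (int \<times> (int \<times> int \<times> int \<times> int \<times> int)) set" where
  "C_pairs q = {(D, X). squarefree D \<and> primitive5 X \<and> C_eqs D X \<and>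
                   (q dvd D \<or> [fst (snd (snd (snd X))) = 0] (mod q))}"

definition E1_x_of_C :: "int \<times> int \<times> int \<times> int \<times> int \<Rightarrow> rat" where
  "E1_x_of_C X = (case X of (x0, x1, x2, x3, x4) \<Rightarrow> 6 * (of_int x0 / of_int x4)^2)"

context
  fixes q :: int
  assumes prime_q: "prime q" and q_gt_3: "q > 3"
begin

text \<open>With \<open>x = 6 u\<^sup>2\<close>, \<open>x + 2 = 8 r\<^sub>1\<^sup>2\<close>, \<open>x + 6 = 12 r\<^sub>2\<^sup>2\<close>, the point \<open>[u : r\<^sub>1 : r\<^sub>2 : \<cdot> : 1]\<close> lies on
  \<open>C\<^sub>D\<close> with \<open>D x\<^sub>3\<^sup>2/x\<^sub>4\<^sup>2 = 2 r\<^sub>2\<^sup>2 - r\<^sub>1\<^sup>2 = (x + 18)/24\<close>; so \<open>x \<equiv> -18\<close> forces \<open>q | D x\<^sub>3\<^sup>2\<close>.\<close>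

lemma C_pair_of_sq_class_P:
  assumes "sq_class 6 2 3 x" "zero_at q (x + 18)"
  obtains D X where "(D, X) \<in> C_pairs q" "E1_x_of_C X = x"
proof -
  obtain u v w where uvw: "x = 6 * u^2" "x + 2 = 2 * v^2" "x + 6 = 3 * w^2"
    using assms(1) unfolding sq_class_def by auto
  obtain x0 x1 x2 x4 where B: "u = of_int x0 / of_int x4" "v / 2 = of_int x1 / of_int x4"
      "w / 2 = of_int x2 / of_int x4" "x4 > 0" "gcd x0 (gcd x1 (gcd x2 x4)) = 1"
    by (rule rat_triple_common_denominator)
  have x4: "(of_int x4 :: rat) \<noteq> 0" using B(4) by simp
  have v: "v = 2 * of_int x1 / of_int x4" and w: "w = 2 * of_int x2 / of_int x4"
    using B(2,3) by (simp_all add: field_simps)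
  have "of_int (x0^2 - 2 * x1^2 + x2^2) = (of_int x4^2 / 12) * (2 * (6 * u^2) - 3 * (2 * v^2) + 3 * w^2)"
    using x4 unfolding B(1) v w by (simp add: field_simps power2_eq_square)
  also have "2 * (6 * u^2) - 3 * (2 * v^2) + 3 * w^2 = 0" using uvw by linarith
  finally have e1: "x0^2 - 2 * x1^2 + x2^2 = 0" by (simp only: mult_zero_right of_int_eq_0_iff)
  have "of_int (2 * x1^2 - 3 * x2^2 + x4^2) = (of_int x4^2 / 4) * (2 * v^2 - 3 * w^2 + 4)"
    using x4 unfolding v w by (simp add: field_simps power2_eq_square)
  also have "2 * v^2 - 3 * w^2 + 4 = 0" using uvw by linarith
  finally have e2: "2 * x1^2 - 3 * x2^2 + x4^2 = 0" by (simp only: mult_zero_right of_int_eq_0_iff)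
  obtain D x3 where C: "squarefree D" "primitive5 (x0, x1, x2, x3, x4)" "C_eqs D (x0, x1, x2, x3, x4)"
      and D: "D * x3^2 = 2 * x2^2 - x1^2"
    using C_point_of_integer_solution[OF e1 e2 B(5)] by blast
  have "of_int (24 * (D * x3^2)) = of_int (x4^2) * (6 * (2 * w^2 - v^2))"
    using x4 unfolding D v w by (simp add: field_simps power2_eq_square)
  also have "6 * (2 * w^2 - v^2) = 4 * (3 * w^2) - 3 * (2 * v^2)" by simp
  also have "\<dots> = x + 18" using uvw by simp
  moreover have "zero_at q (of_int (x4^2) * (x + 18))"
    by (rule zero_at_mult_right[OF prime_q integral_at_of_int[OF prime_q] assms(2)])
  ultimately have "zero_at q (of_int (24 * (D * x3^2)))" by simp
  hence "q dvd 24 * (D * x3^2)" by (simp only: zero_at_of_int_iff[OF prime_q])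
  moreover have "\<not> q dvd 24" by (rule not_dvd_divisor_24[OF prime_q q_gt_3]) simp
  ultimately have "q dvd D \<or> q dvd x3^2" by (simp add: prime_dvd_mult_iff[OF prime_q])
  hence "q dvd D \<or> q dvd x3" using prime_dvd_power[OF prime_q] by blast
  hence "(D, (x0, x1, x2, x3, x4)) \<in> C_pairs q" using C unfolding C_pairs_def by (auto simp: cong_0_iff)
  moreover have "E1_x_of_C (x0, x1, x2, x3, x4) = x" unfolding E1_x_of_C_def using uvw(1) B(1) by simp
  ultimately show ?thesis using that by blast
qed

lemma infinite_sq_class_P_near_minus_18:
  assumes "\<exists>Q \<in> red q ` H_set. \<exists>a b. Q = Some (a, b) \<and> [a = -18] (mod q)"
  shows "infinite {x. sq_class 6 2 3 x \<and> zero_at q (x + 18)}"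
proof -
  obtain a b where R: "b^2 = E1_cubic a" "sq_class 6 2 3 a" "integral_at q a" "zero_at q (a + 18)"
    by (rule H_set_point_near_minus_18[OF prime_q assms])
  define S where "S = {(x, y). y^2 = E1_cubic x \<and> \<not> integral_at q x \<and> sq_class 1 1 1 x}"
  define T where "T p = the (E1_add (Some (a, b)) (Some p))" for p
  have T: "E1_add (Some (a, b)) (Some p) = Some (T p) \<and> snd (T p)^2 = E1_cubic (fst (T p)) \<and>
      sq_class 6 2 3 (fst (T p)) \<and> zero_at q (fst (T p) + 18)" if pS: "p \<in> S" for p
  proof -
    obtain xk yk where p: "p = (xk, yk)" "yk^2 = E1_cubic xk" "\<not> integral_at q xk" "sq_class 1 1 1 xk"
      using pS unfolding S_def by blast
    obtain x3 y3 where sum: "E1_add (Some (a, b)) (Some (xk, yk)) = Some (x3, y3)"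
        and x3: "zero_at q (x3 - a)"
      by (rule E1_add_kernel_x_congruent[OF prime_q R(1,3) p(2,3)])
    have "y3^2 = E1_cubic x3"
      using E1_add_in_E1_points[of "Some (a, b)" "Some (xk, yk)"] R(1) p(2) sum by simp
    moreover have "sq_class 6 2 3 x3"
      using sq_class_add[OF R(1) p(2) sum R(2) p(4) sq_class_6_2_3_cubic_nonzero[OF R(2)]
          sq_class_1_1_1_cubic_nonzero[OF p(4)]] by simp
    moreover have "zero_at q (x3 + 18)" using zero_at_add[OF prime_q x3 R(4)] by simp
    ultimately show ?thesis using sum unfolding p(1) T_def by simp
  qed
  have "inj_on T S"
  proof (rule inj_onI)
    fix p p' assume p: "p \<in> S" "p' \<in> S" "T p = T p'"
    have "Some p \<in> E1_points" "Some p' \<in> E1_points" using p(1,2) unfolding S_def by auto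
    hence "Some p = Some p'"
      using E1_add_neg_cancel[of "Some (a, b)" "Some p"] E1_add_neg_cancel[of "Some (a, b)" "Some p'"]
        T[OF p(1)] T[OF p(2)] p(3) R(1) by simp
    thus "p = p'" by simp
  qed
  moreover have "infinite S" unfolding S_def by (rule infinite_kernel_points[OF prime_q q_gt_3])
  ultimately have "infinite (T ` S)" using finite_imageD by blast
  moreover have "y^2 = E1_cubic x" if "(x, y) \<in> T ` S" for x y
    using that T by (metis (no_types, lifting) fst_conv image_iff snd_conv)
  ultimately have "infinite (fst ` T ` S)" by (rule infinite_E1_x_coordinates)
  moreover have "fst ` T ` S \<subseteq> {x. sq_class 6 2 3 x \<and> zero_at q (x + 18)}" using T by blast
  ultimately show ?thesis using finite_subset by blast
qed

end

theorem corollary6p3: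
  fixes q :: int
  assumes "prime q" and "q > 3"
    and "\<exists>Q \<in> red q ` H_set. \<exists>a b. Q = Some (a, b) \<and> [a = -18] (mod q)"
  shows "infinite {(D, X). squarefree D \<and> primitive5 X \<and> C_eqs D X \<and>
                   (q dvd D \<or> [fst (snd (snd (snd X))) = 0] (mod q))}"
proof -
  have "{x. sq_class 6 2 3 x \<and> zero_at q (x + 18)} \<subseteq> E1_x_of_C ` snd ` C_pairs q"
  proof
    fix x assume "x \<in> {x. sq_class 6 2 3 x \<and> zero_at q (x + 18)}"
    then obtain D X where "(D, X) \<in> C_pairs q" "E1_x_of_C X = x"
      using C_pair_of_sq_class_P[OF assms(1,2)] by blast
    thus "x \<in> E1_x_of_C ` snd ` C_pairs q" by force
  qed
  moreover have "infinite {x. sq_class 6 2 3 x \<and> zero_at q (x + 18)}"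
    by (rule infinite_sq_class_P_near_minus_18[OF assms])
  ultimately have "infinite (E1_x_of_C ` snd ` C_pairs q)" using finite_subset by blast
  thus ?thesis unfolding C_pairs_def[symmetric] by blast
qed

end
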